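(* Let $G$ be a finite group of odd order. Then $\Gamma_{G,H}$ admits a perfect code for every normal subgroup $H$ of $G$.
   Context: For a normal subgroup $H$ of a finite group $G$ with identity $e$, the subgroup sum graph $\Gamma_{G,H}$ is the simple undirected graph with vertex set $G$ in which distinct vertices $x,y$ are adjacent if and only if $xy\in H\setminus\{e\}$. A perfect code in a graph is a set $C$ of vertices that is independent and such that every vertex not in $C$ is adjacent to exactly one vertex of $C$. *)

theory Defs
  imports "HOL-Algebra.Algebra"
begin

definition ssg_adj :: "('a, 'b) monoid_scheme \<Rightarrow> 'a set \<Rightarrow> 'a \<Rightarrow> 'a \<Rightarrow> bool" where
  "ssg_adj G H x y \<longleftrightarrow> x \<in> carrier G \<and> y \<in> carrier G \<and> x \<noteq> y \<and>
     x \<otimes>\<^bsub>G\<^esub> y \<in> H - {\<one>\<^bsub>G\<^esub>}"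

definition perfect_code :: "'a set \<Rightarrow> ('a \<Rightarrow> 'a \<Rightarrow> bool) \<Rightarrow> 'a set \<Rightarrow> bool" where
  "perfect_code V adj C \<longleftrightarrow> C \<subseteq> V \<and>
     (\<forall>x\<in>C. \<forall>y\<in>C. \<not> adj x y) \<and>
     (\<forall>v\<in>V - C. \<exists>!c. c \<in> C \<and> adj v c)"

end

theory Submission
  imports Defs
begin

text \<open>Two vertices are adjacent, x \<otimes> y \<in> H, exactly when y lies in the coset H x\<inverse>, so the graph
  only sees cosets of H. A set C meeting every coset in exactly one element and closed under
  inversion is therefore a perfect code: two code words are adjacent only if they are mutually
  inverse, and a vertex v outside C is adjacent precisely to the code word in the coset of v\<inverse>.
  Such a transversal exists when |G| is odd: then x \<otimes> x \<in> H forces x \<in> H, so inversion fixes no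
  coset other than H and the remaining cosets fall into pairs {K, K\<inverse>}. Choose one element of
  K \<union> K\<inverse> per pair and take it together with its inverse, and take \<one> from H.\<close>

lemma (in group) square_mem_imp_mem:
  assumes H: "subgroup H G" and odd: "odd (order G)"
    and x: "x \<in> carrier G" and sq: "x \<otimes> x \<in> H"
  shows "x \<in> H"
proof -
  obtain k where k: "order G = Suc (2 * k)"
    using odd by (metis oddE Suc_eq_plus1)
  have "\<one> = x [^] order G"
    using pow_order_eq_1[OF x] by simp
  also have "\<dots> = x \<otimes> (x [^] (2::nat)) [^] k"
    using x by (simp only: k nat_pow_Suc2 nat_pow_pow)
  also have "\<dots> = x \<otimes> (x \<otimes> x) [^] k"
    using x by (simp add: numeral_2_eq_2)
  finally have "x = inv ((x \<otimes> x) [^] k)"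
    using x by (metis inv_equality nat_pow_closed m_closed)
  moreover have "(x \<otimes> x) [^] k \<in> H"
    using sq by (induct k) (simp_all add: subgroup.one_closed[OF H] subgroup.m_closed[OF H])
  ultimately show ?thesis
    using subgroup.m_inv_closed[OF H] by metis
qed

definition inv_closed_transversal :: "('a, 'b) monoid_scheme \<Rightarrow> 'a set \<Rightarrow> 'a set \<Rightarrow> bool" where
  "inv_closed_transversal G H C \<longleftrightarrow> C \<subseteq> carrier G \<and> (\<forall>c\<in>C. inv\<^bsub>G\<^esub> c \<in> C) \<and>
     (\<forall>x\<in>carrier G. \<exists>!c. c \<in> C \<and> c \<in> H #>\<^bsub>G\<^esub> x)"

context normal
begin

lemma mult_mem_commute:
  assumes "x \<in> carrier G" "y \<in> carrier G" "x \<otimes> y \<in> H"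
  shows "y \<otimes> x \<in> H"
proof -
  have "inv x \<otimes> (x \<otimes> y) \<otimes> x \<in> H"
    using inv_op_closed1 assms by blast
  then show ?thesis
    using assms by (simp add: m_assoc[symmetric])
qed

lemma mult_mem_iff_mem_rcos_inv:
  assumes "x \<in> carrier G" "y \<in> carrier G"
  shows "x \<otimes> y \<in> H \<longleftrightarrow> y \<in> H #> inv x"
  using assms mult_mem_commute by (auto simp: rcos_module[OF is_group])

lemma inv_closed_transversal_imp_perfect_code:
  assumes C: "inv_closed_transversal G H C"
  shows "perfect_code (carrier G) (ssg_adj G H) C"
proof -
  have CG: "C \<subseteq> carrier G" and inv_C: "\<And>c. c \<in> C \<Longrightarrow> inv c \<in> C"
    and transv: "\<And>x. x \<in> carrier G \<Longrightarrow> \<exists>!c. c \<in> C \<and> c \<in> H #> x"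
    using C by (auto simp: inv_closed_transversal_def)
  have adj_iff: "ssg_adj G H v c \<longleftrightarrow> v \<noteq> c \<and> c \<noteq> inv v \<and> c \<in> H #> inv v"
    if "v \<in> carrier G" "c \<in> carrier G" for v c
    using that mult_mem_iff_mem_rcos_inv[OF that] inv_equality[of v c]
    by (auto simp: ssg_adj_def)
  have independent: "\<not> ssg_adj G H c d" if "c \<in> C" "d \<in> C" for c d
  proof
    assume "ssg_adj G H c d"
    then have "d \<in> H #> inv c" "d \<noteq> inv c"
      using adj_iff that CG by auto
    moreover have "inv c \<in> H #> inv c"
      using that CG by (auto intro: rcos_self subgroup_axioms)
    ultimately show False
      using transv[of "inv c"] that CG inv_C by blast
  qed
  have dominating: "\<exists>!c. c \<in> C \<and> ssg_adj G H v c" if v: "v \<in> carrier G - C" for v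
  proof -
    obtain c where c: "c \<in> C" "c \<in> H #> inv v"
      using transv[of "inv v"] v by auto
    have "c \<noteq> inv v"
      using v inv_C[OF c(1)] CG c(1) by auto
    then have "ssg_adj G H v c"
      using adj_iff c v CG by auto
    moreover have "c' = c" if "c' \<in> C" "ssg_adj G H v c'" for c'
      using that c adj_iff[of v c'] transv[of "inv v"] v CG by auto
    ultimately show ?thesis
      using c(1) by blast
  qed
  show ?thesis
    unfolding perfect_code_def using CG independent dominating by blast
qed

lemma set_inv_set_inv_rcos:
  assumes "K \<in> rcosets H"
  shows "set_inv (set_inv K) = K"
  using assms by (auto simp: RCOSETS_def rcos_inv)

lemma set_inv_subgroup: "set_inv H = H"
  using rcos_inv[of \<one>] coset_join2[OF one_closed subgroup_axioms] by simp

lemma rcos_disjoint_set_inv: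
  assumes odd: "odd (order G)" and K: "K \<in> rcosets H" "K \<noteq> H"
  shows "K \<inter> set_inv K = {}"
proof -
  obtain x where x: "x \<in> carrier G" "K = H #> x"
    using K by (auto simp: RCOSETS_def)
  have "x \<notin> H"
    using x K coset_join2[OF _ subgroup_axioms] by blast
  then have "x \<otimes> x \<notin> H"
    using square_mem_imp_mem[OF subgroup_axioms odd x(1)] by blast
  have "H #> x \<noteq> H #> inv x"
  proof
    assume "H #> x = H #> inv x"
    then have "x \<in> H #> inv x"
      using rcos_self[OF x(1) subgroup_axioms] by simp
    with \<open>x \<otimes> x \<notin> H\<close> show False
      using x(1) by (simp add: rcos_module[OF is_group])
  qed
  moreover have "H #> inv x \<in> rcosets H"
    using x(1) by (simp add: rcosetsI subset)
  ultimately show ?thesis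
    using rcos_disjoint[OF subgroup_axioms] K x
    by (auto simp: rcos_inv pairwise_def disjnt_def)
qed

end

text \<open>The choice only depends on the pair {K, K\<inverse>}, so a coset and its inverse coset choose the
  same element; this is what makes the representatives closed under inversion.\<close>
definition inv_pair_choice :: "('a, 'b) monoid_scheme \<Rightarrow> 'a set \<Rightarrow> 'a" where
  "inv_pair_choice G K = (SOME y. y \<in> K \<union> set_inv\<^bsub>G\<^esub> K)"

definition symmetric_coset_rep :: "('a, 'b) monoid_scheme \<Rightarrow> 'a set \<Rightarrow> 'a set \<Rightarrow> 'a" where
  "symmetric_coset_rep G H K =
     (if K = H then \<one>\<^bsub>G\<^esub>
      else if inv_pair_choice G K \<in> K then inv_pair_choice G K
      else inv\<^bsub>G\<^esub> inv_pair_choice G K)"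

context normal
begin

lemma inv_pair_choice_mem:
  assumes K: "K \<in> rcosets H"
  shows "inv_pair_choice G K \<in> K \<union> set_inv K"
proof -
  have "K \<noteq> {}"
    using K by (auto simp: RCOSETS_def dest: rcos_self[OF _ subgroup_axioms])
  then show ?thesis
    unfolding inv_pair_choice_def by (metis UnI1 ex_in_conv someI)
qed

lemma symmetric_coset_rep_mem:
  assumes K: "K \<in> rcosets H"
  shows "symmetric_coset_rep G H K \<in> K"
proof -
  have "inv_pair_choice G K \<notin> K \<Longrightarrow> inv (inv_pair_choice G K) \<in> set_inv (set_inv K)"
    using inv_pair_choice_mem[OF K] by (auto simp: SET_INV_def)
  then show ?thesis
    using K set_inv_set_inv_rcos[OF K] by (auto simp: symmetric_coset_rep_def)
qed

lemma symmetric_coset_rep_set_inv: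
  assumes odd: "odd (order G)" and K: "K \<in> rcosets H"
  shows "symmetric_coset_rep G H (set_inv K) = inv (symmetric_coset_rep G H K)"
proof (cases "K = H")
  case True
  then show ?thesis
    by (simp add: symmetric_coset_rep_def set_inv_subgroup)
next
  case False
  define p where "p = inv_pair_choice G K"
  have set_inv_K: "set_inv K \<noteq> H"
    using False set_inv_set_inv_rcos[OF K] set_inv_subgroup by metis
  have same_choice: "inv_pair_choice G (set_inv K) = p"
    unfolding inv_pair_choice_def p_def using set_inv_set_inv_rcos[OF K] by (simp add: Un_commute)
  have p: "p \<in> K \<union> set_inv K"
    using inv_pair_choice_mem[OF K] by (simp add: p_def)
  show ?thesis
  proof (cases "p \<in> K")
    case True
    then have "p \<notin> set_inv K"
      using rcos_disjoint_set_inv[OF odd K False] by blast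
    then show ?thesis
      using True False set_inv_K same_choice by (simp add: symmetric_coset_rep_def p_def[symmetric])
  next
    case p_notin: False
    then have "p \<in> set_inv K"
      using p by blast
    moreover have "p \<in> carrier G"
      using \<open>p \<in> set_inv K\<close> rcosets_carrier[OF is_group setinv_closed[OF K]] by blast
    ultimately show ?thesis
      using p_notin False set_inv_K same_choice by (simp add: symmetric_coset_rep_def p_def[symmetric])
  qed
qed

lemma inv_closed_transversal_exists:
  assumes odd: "odd (order G)"
  shows "\<exists>C. inv_closed_transversal G H C"
proof -
  let ?rep = "symmetric_coset_rep G H"
  have rep_unique: "?rep K = ?rep (H #> x)"
    if K: "K \<in> rcosets H" and rep_in: "?rep K \<in> H #> x" and x: "x \<in> carrier G" for K x
  proof -
    obtain a where a: "a \<in> carrier G" "K = H #> a"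
      using K by (auto simp: RCOSETS_def)
    then have "K = H #> ?rep K"
      using repr_independence[OF _ a(1) subgroup_axioms] symmetric_coset_rep_mem[OF K] by simp
    also have "\<dots> = H #> x"
      using repr_independence[OF rep_in x subgroup_axioms] by simp
    finally show ?thesis by simp
  qed
  have transversal: "\<exists>!c. c \<in> ?rep ` (rcosets H) \<and> c \<in> H #> x" if x: "x \<in> carrier G" for x
  proof (rule ex1I)
    show "?rep (H #> x) \<in> ?rep ` (rcosets H) \<and> ?rep (H #> x) \<in> H #> x"
      using x by (simp add: symmetric_coset_rep_mem rcosetsI subset)
  next
    fix c
    assume "c \<in> ?rep ` (rcosets H) \<and> c \<in> H #> x"
    then obtain K where "K \<in> rcosets H" "c = ?rep K" "?rep K \<in> H #> x"
      by blast
    then show "c = ?rep (H #> x)"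
      using rep_unique x by simp
  qed
  have inv_closed: "inv c \<in> ?rep ` (rcosets H)" if c: "c \<in> ?rep ` (rcosets H)" for c
  proof -
    obtain K where K: "K \<in> rcosets H" "c = ?rep K"
      using c by blast
    then have "inv c = ?rep (set_inv K)"
      using symmetric_coset_rep_set_inv[OF odd K(1)] by simp
    then show ?thesis
      using setinv_closed[OF K(1)] by simp
  qed
  have "?rep ` (rcosets H) \<subseteq> carrier G"
    using symmetric_coset_rep_mem rcosets_carrier[OF is_group] by blast
  then have "inv_closed_transversal G H (?rep ` (rcosets H))"
    unfolding inv_closed_transversal_def using transversal inv_closed by simp
  then show ?thesis ..
qed

end

theorem corollary3p3:
  fixes G :: "('a, 'b) monoid_scheme" and H :: "'a set"
  assumes "group G" and "finite (carrier G)" and "odd (order G)"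
    and "H \<lhd> G"
  shows "\<exists>C. perfect_code (carrier G) (ssg_adj G H) C"
proof -
  interpret normal H G by fact
  obtain C where "inv_closed_transversal G H C"
    using inv_closed_transversal_exists[OF \<open>odd (order G)\<close>] by blast
  then show ?thesis
    using inv_closed_transversal_imp_perfect_code by blast
qed

end
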